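(* For every $n\ge1$ and $i,j\in S$, $(E^n)_{ij}$ equals the probability that the BPME started with population $n$ in environment $i$ halts in $0.j$. Moreover $f(E)=E$, and for every $S\times S$ matrix $M$ with $0\le M\le E$ entrywise, $\lim_{n\to\infty}f^n(M)=E$, where $f^n$ is the $n$-th iterate of $f$ (in particular $\lim_{n\to\infty}f^n(O)=E$ for the zero matrix $O$).
   Context: Let $S$ be a finite set and $P$ the transition matrix of an irreducible Markov chain on $S$. For each $j\in S$ let $(R_{jn})_{n\in\mathbb{N}}$ be a probability distribution on $\mathbb{N}$. Let $(\xi_t^i)_{t\ge1,i\in S}$ be independent with $\mathbb{P}(\xi_t^i=n)=R_{in}$, let $(Q_t)_{t\ge0}$ be a Markov chain with transition matrix $P$ independent of the $\xi$'s, and $\xi_t=\sum_{i}\xi_t^i\mathbf{1}\{Q_t=i\}$. The BPME is $X_{t+1}=X_t-1+\xi_{t+1}$ if $X_t>0$ and $X_{t+1}=0$ if $X_t=0$, with $X_0\ge1$. The process started from $X_0=n$, $Q_0=i$ halts in $0.j$ if $T:=\inf\{t:X_t=0\}$ is finite and $Q_T=j$. The extinction matrix $E$ is the $S\times S$ matrix with $E_{ij}$ the probability that the BPME started from $X_0=1$, $Q_0=i$ halts in $0.j$. For $n\in\mathbb{N}$ let $(P_n)_{ij}=P_{ij}R_{jn}$, and define the matrix generating function $f(M)=\sum_{n\ge0}P_nM^n$ for substochastic $S\times S$ matrices $M$, with $M^0=I$. *)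

theory Defs
  imports "HOL-Analysis.Analysis" "HOL-Probability.Probability"
begin

text \<open>The transition matrix P is given row-wise
  as a kernel P :: 'a => 'a pmf (so P i j = pmf (P i) j), and the offspring laws
  R j are given as R :: 'a => nat pmf (so R j n = pmf (R j) n).\<close>

definition mpow :: "real^'a::finite^'a \<Rightarrow> nat \<Rightarrow> real^'a^'a" where
  "mpow M k = ((\<lambda>A. A ** M) ^^ k) (mat 1)"

definition Pmat :: "('a::finite \<Rightarrow> 'a pmf) \<Rightarrow> real^'a^'a" where
  "Pmat P = (\<chi> i j. pmf (P i) j)"

definition irreducible_chain :: "('a::finite \<Rightarrow> 'a pmf) \<Rightarrow> bool" where
  "irreducible_chain P \<longleftrightarrow> (\<forall>i j. \<exists>k. mpow (Pmat P) k $ i $ j > 0)"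

definition Pn :: "('a::finite \<Rightarrow> 'a pmf) \<Rightarrow> ('a \<Rightarrow> nat pmf) \<Rightarrow> nat \<Rightarrow> real^'a^'a" where
  "Pn P R n = (\<chi> i j. pmf (P i) j * pmf (R j) n)"

definition genf :: "('a::finite \<Rightarrow> 'a pmf) \<Rightarrow> ('a \<Rightarrow> nat pmf) \<Rightarrow> real^'a^'a \<Rightarrow> real^'a^'a" where
  "genf P R M = (\<chi> i j. \<Sum>n. (Pn P R n ** mpow M n) $ i $ j)"

fun Qpath :: "('a \<Rightarrow> 'a pmf) \<Rightarrow> 'a \<Rightarrow> nat \<Rightarrow> 'a list pmf" where
  "Qpath P i 0 = return_pmf [i]"
| "Qpath P i (Suc t) = bind_pmf (Qpath P i t) (\<lambda>qs. map_pmf (\<lambda>q. qs @ [q]) (P (last qs)))"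

definition Xilaw :: "('a::finite \<Rightarrow> nat pmf) \<Rightarrow> nat \<Rightarrow> (nat \<times> 'a \<Rightarrow> nat) pmf" where
  "Xilaw R t = Pi_pmf ({1..t} \<times> UNIV) 0 (\<lambda>(s,k). R k)"

fun Xproc :: "nat \<Rightarrow> 'a list \<Rightarrow> (nat \<times> 'a \<Rightarrow> nat) \<Rightarrow> nat \<Rightarrow> nat" where
  "Xproc n qs xi 0 = n"
| "Xproc n qs xi (Suc s) =
     (if Xproc n qs xi s > 0 then Xproc n qs xi s - 1 + xi (Suc s, qs ! Suc s) else 0)"

definition halted_by :: "nat \<Rightarrow> 'a \<Rightarrow> nat \<Rightarrow> 'a list \<times> (nat \<times> 'a \<Rightarrow> nat) \<Rightarrow> bool" where
  "halted_by n j t \<omega> = (\<exists>T\<le>t. Xproc n (fst \<omega>) (snd \<omega>) T = 0 \<and>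
       (\<forall>s<T. Xproc n (fst \<omega>) (snd \<omega>) s > 0) \<and> fst \<omega> ! T = j)"

definition halt_prob_by :: "('a::finite \<Rightarrow> 'a pmf) \<Rightarrow> ('a \<Rightarrow> nat pmf) \<Rightarrow> nat \<Rightarrow> 'a \<Rightarrow> 'a \<Rightarrow> nat \<Rightarrow> real" where
  "halt_prob_by P R n i j t =
     measure_pmf.prob (pair_pmf (Qpath P i t) (Xilaw R t)) {\<omega>. halted_by n j t \<omega>}"

text \<open>P(T < infinity, Q_T = j) = sup_t P(T <= t, Q_T = j) (continuity from below).\<close>
definition halt_prob :: "('a::finite \<Rightarrow> 'a pmf) \<Rightarrow> ('a \<Rightarrow> nat pmf) \<Rightarrow> nat \<Rightarrow> 'a \<Rightarrow> 'a \<Rightarrow> real" where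
  "halt_prob P R n i j = (SUP t. halt_prob_by P R n i j t)"

definition extinction_matrix :: "('a::finite \<Rightarrow> 'a pmf) \<Rightarrow> ('a \<Rightarrow> nat pmf) \<Rightarrow> real^'a^'a" where
  "extinction_matrix P R = (\<chi> i j. halt_prob P R 1 i j)"

end

theory Submission
  imports Defs
begin

text \<open>Let h_t(n) be the matrix of probabilities that the process started with population n
  halts in 0.j within t steps. Conditioning on the first step gives
  h_(t+1)(n+1) = \<Sum>_m P_m h_t(n+m), together with h_t(0) = I and h_0(n+1) = 0. From this recursion
  alone, h_t(n) increases with t, and induction on t gives the entrywise inequalities
  h_t(a+b) \<le> h_t(a) h_t(b) and h_t(a) h_t'(b) \<le> h_(t+t')(a+b): to lose a+b individuals the
  population must first lose a of them. In the limit t \<rightarrow> \<infinity> the halting probabilities are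
  therefore multiplicative in n, i.e. equal to E^n, and the recursion becomes f(E) = E.
  Finally f is monotone on [0, E] and h_k(1) \<le> f^k(M) \<le> E for 0 \<le> M \<le> E, so f^k(M) \<rightarrow> E.\<close>

lemma measure_pmf_prob_bind_pmf:
  "measure_pmf.prob (bind_pmf M N) X = measure_pmf.expectation M (\<lambda>x. measure_pmf.prob (N x) X)"
proof -
  have "ennreal (measure_pmf.prob (bind_pmf M N) X) = emeasure (measure_pmf (bind_pmf M N)) X"
    by (simp add: measure_pmf.emeasure_eq_measure)
  also have "\<dots> = (\<integral>\<^sup>+x. emeasure (N x) X \<partial>M)" by simp
  also have "\<dots> = (\<integral>\<^sup>+x. ennreal (measure_pmf.prob (N x) X) \<partial>M)"
    by (simp add: measure_pmf.emeasure_eq_measure)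
  also have "\<dots> = ennreal (measure_pmf.expectation M (\<lambda>x. measure_pmf.prob (N x) X))"
    by (intro nn_integral_eq_integral measure_pmf.integrable_const_bound[where B=1]) auto
  finally show ?thesis by (simp add: ennreal_inj)
qed

lemma measure_pmf_expectation_finite:
  fixes M :: "'a::finite pmf"
  shows "measure_pmf.expectation M g = (\<Sum>k\<in>UNIV. pmf M k * g k)"
  by (subst integral_measure_pmf_real[of UNIV]) (auto simp: mult.commute)

lemma summable_pmf_nat: "summable (pmf (R::nat pmf))"
proof -
  have "integrable (count_space UNIV) (pmf R)" by (rule integrable_pmf)
  then show ?thesis by (simp add: integrable_count_space_nat_iff)
qed

lemma summable_pmf_mult_bounded:
  fixes g :: "nat \<Rightarrow> real"
  assumes "\<And>m. \<bar>g m\<bar> \<le> C"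
  shows "summable (\<lambda>m. pmf (R::nat pmf) m * g m)"
proof (rule summable_comparison_test[where g="\<lambda>m. pmf R m * C"])
  show "summable (\<lambda>m. pmf R m * C)" by (intro summable_mult2 summable_pmf_nat)
  show "\<exists>N. \<forall>n\<ge>N. norm (pmf R n * g n) \<le> pmf R n * C"
    using assms by (auto simp: abs_mult intro!: mult_left_mono)
qed

lemma measure_pmf_expectation_nat:
  fixes R :: "nat pmf" and g :: "nat \<Rightarrow> real"
  assumes "\<And>m. \<bar>g m\<bar> \<le> C"
  shows "measure_pmf.expectation R g = (\<Sum>m. pmf R m * g m)"
proof -
  have "integrable (measure_pmf R) g"
    by (intro measure_pmf.integrable_const_bound[where B=C]) (auto simp: assms)
  then have "integrable (count_space UNIV) (\<lambda>m. pmf R m * g m)"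
    by (simp add: measure_pmf_eq_density integrable_density)
  then show ?thesis
    by (simp add: measure_pmf_eq_density integral_density integral_count_space_nat)
qed

lemma abs_sum_mult_le_card:
  fixes x y :: "'a::finite \<Rightarrow> real"
  assumes "\<And>k. \<bar>x k\<bar> \<le> 1" "\<And>k. \<bar>y k\<bar> \<le> 1"
  shows "\<bar>\<Sum>k\<in>UNIV. x k * y k\<bar> \<le> real CARD('a)"
proof -
  have "\<bar>\<Sum>k\<in>UNIV. x k * y k\<bar> \<le> (\<Sum>k\<in>UNIV. \<bar>x k\<bar> * \<bar>y k\<bar>)"
    unfolding abs_mult[symmetric] by (rule sum_abs)
  also have "\<dots> \<le> (\<Sum>k\<in>(UNIV::'a set). 1)"
    using assms by (intro sum_mono mult_le_one) auto
  finally show ?thesis by simp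
qed

lemma mpow_0: "mpow M 0 = mat 1"
  by (simp add: mpow_def)

lemma mpow_Suc: "mpow M (Suc n) = mpow M n ** M"
  by (simp add: mpow_def)

lemma mpow_mono:
  fixes A B :: "real^'n::finite^'n"
  assumes "0 \<le> A" "A \<le> B"
  shows "0 \<le> mpow A n \<and> mpow A n \<le> mpow B n"
proof -
  have A: "0 \<le> A $ k $ j" "A $ k $ j \<le> B $ k $ j" for k j
    using assms by (simp_all add: less_eq_vec_def)
  have "0 \<le> mpow A n $ i $ j \<and> mpow A n $ i $ j \<le> mpow B n $ i $ j" for i j
  proof (induction n arbitrary: j)
    case 0
    then show ?case by (simp add: mpow_0 mat_def)
  next
    case (Suc n)
    then show ?case
      unfolding mpow_Suc matrix_matrix_mult_def vec_lambda_beta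
      using A by (auto intro!: sum_nonneg sum_mono mult_mono intro: order_trans)
  qed
  then show ?thesis by (simp add: less_eq_vec_def)
qed

section \<open>The first-step operator\<close>

text \<open>With X m k = (X_m)_kj, \<open>first_step P R i X\<close> is the entry (\<Sum>_m P_m X_m)_ij.\<close>

definition first_step ::
    "('s::finite \<Rightarrow> 's pmf) \<Rightarrow> ('s \<Rightarrow> nat pmf) \<Rightarrow> 's \<Rightarrow> (nat \<Rightarrow> 's \<Rightarrow> real) \<Rightarrow> real" where
  "first_step P R i X = (\<Sum>k\<in>UNIV. pmf (P i) k * (\<Sum>m. pmf (R k) m * X m k))"

lemma first_step_nonneg:
  assumes "\<And>m k. \<bar>X m k\<bar> \<le> C" "\<And>m k. 0 \<le> X m k"
  shows "0 \<le> first_step P R i X"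
  unfolding first_step_def
  by (intro sum_nonneg mult_nonneg_nonneg suminf_nonneg summable_pmf_mult_bounded[where C=C] assms) auto

lemma first_step_mono:
  assumes "\<And>m k. \<bar>X m k\<bar> \<le> C" "\<And>m k. \<bar>Y m k\<bar> \<le> C" "\<And>m k. X m k \<le> Y m k"
  shows "first_step P R i X \<le> first_step P R i Y"
  unfolding first_step_def
  by (intro sum_mono mult_left_mono suminf_le summable_pmf_mult_bounded[where C=C] assms) auto

lemma first_step_tendsto:
  assumes "\<And>m k. (\<lambda>t. X t m k) \<longlonglongrightarrow> Y m k" "\<And>t m k. \<bar>X t m k\<bar> \<le> C"
  shows "(\<lambda>t. first_step P R i (X t)) \<longlonglongrightarrow> first_step P R i Y"
  unfolding first_step_def
proof (intro tendsto_sum tendsto_mult tendsto_const)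
  fix k
  have bound: "eventually (\<lambda>(m, t). norm (pmf (R k) m * X t m k) \<le> pmf (R k) m * C)
      (at_top \<times>\<^sub>F sequentially)"
    using assms(2) by (intro always_eventually) (auto simp: abs_mult intro: mult_left_mono)
  have "(\<lambda>t. pmf (R k) m * X t m k) \<longlonglongrightarrow> pmf (R k) m * Y m k" for m
    by (intro tendsto_mult_left assms(1))
  from tannerys_theorem[OF this bound summable_mult2[OF summable_pmf_nat]]
  show "(\<lambda>t. \<Sum>m. pmf (R k) m * X t m k) \<longlonglongrightarrow> (\<Sum>m. pmf (R k) m * Y m k)"
    by simp
qed

lemma first_step_sum_mult:
  assumes "\<And>m k' k. \<bar>A m k' k\<bar> \<le> C"
  shows "first_step P R i (\<lambda>m k'. \<Sum>k\<in>UNIV. A m k' k * B k) =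
         (\<Sum>k\<in>UNIV. first_step P R i (\<lambda>m k'. A m k' k) * B k)"
proof -
  have summable: "summable (\<lambda>m. pmf (R k') m * A m k' k)" for k' k
    by (intro summable_pmf_mult_bounded[where C=C] assms)
  have inner: "(\<Sum>m. pmf (R k') m * (\<Sum>k\<in>UNIV. A m k' k * B k)) =
        (\<Sum>k\<in>UNIV. (\<Sum>m. pmf (R k') m * A m k' k) * B k)" for k'
  proof -
    have "(\<Sum>m. pmf (R k') m * (\<Sum>k\<in>UNIV. A m k' k * B k)) =
          (\<Sum>m. \<Sum>k\<in>UNIV. pmf (R k') m * A m k' k * B k)"
      by (simp add: sum_distrib_left mult.assoc)
    also have "\<dots> = (\<Sum>k\<in>UNIV. \<Sum>m. pmf (R k') m * A m k' k * B k)"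
      by (intro suminf_sum summable_mult2 summable)
    also have "\<dots> = (\<Sum>k\<in>UNIV. (\<Sum>m. pmf (R k') m * A m k' k) * B k)"
      by (intro sum.cong refl suminf_mult2[symmetric] summable)
    finally show ?thesis .
  qed
  have "first_step P R i (\<lambda>m k'. \<Sum>k\<in>UNIV. A m k' k * B k) =
        (\<Sum>k'\<in>UNIV. pmf (P i) k' * (\<Sum>k\<in>UNIV. (\<Sum>m. pmf (R k') m * A m k' k) * B k))"
    unfolding first_step_def by (simp only: inner)
  also have "\<dots> = (\<Sum>k\<in>UNIV. first_step P R i (\<lambda>m k'. A m k' k) * B k)"
    unfolding first_step_def sum_distrib_left sum_distrib_right mult.assoc by (rule sum.swap)
  finally show ?thesis .
qed

lemma genf_eq_first_step:
  assumes "\<And>n k. \<bar>mpow M n $ k $ j\<bar> \<le> C"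
  shows "genf P R M $ i $ j = first_step P R i (\<lambda>n k. mpow M n $ k $ j)"
proof -
  have summable: "summable (\<lambda>n. pmf (R k) n * mpow M n $ k $ j)" for k
    by (intro summable_pmf_mult_bounded[where C=C] assms)
  have "genf P R M $ i $ j = (\<Sum>n. \<Sum>k\<in>UNIV. pmf (P i) k * (pmf (R k) n * mpow M n $ k $ j))"
    by (simp add: genf_def Pn_def matrix_matrix_mult_def mult.assoc)
  also have "\<dots> = (\<Sum>k\<in>UNIV. \<Sum>n. pmf (P i) k * (pmf (R k) n * mpow M n $ k $ j))"
    by (intro suminf_sum summable_mult summable)
  also have "\<dots> = first_step P R i (\<lambda>n k. mpow M n $ k $ j)"
    unfolding first_step_def by (intro sum.cong refl) (rule suminf_mult[OF summable])
  finally show ?thesis .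
qed

section \<open>Reduction to the realised offspring\<close>

text \<open>Only the realised offspring numbers xi_s^(Q_s) enter the dynamics, so we pass to the joint
  law of the environment path and these numbers.\<close>

fun bpme_pop :: "nat \<Rightarrow> (nat \<Rightarrow> nat) \<Rightarrow> nat \<Rightarrow> nat" where
  "bpme_pop n y 0 = n"
| "bpme_pop n y (Suc s) = (if bpme_pop n y s > 0 then bpme_pop n y s - 1 + y (Suc s) else 0)"

definition halts_within :: "nat \<Rightarrow> 'a \<Rightarrow> nat \<Rightarrow> 'a list \<times> (nat \<Rightarrow> nat) \<Rightarrow> bool" where
  "halts_within n j t \<omega> \<longleftrightarrow>
     (\<exists>T\<le>t. bpme_pop n (snd \<omega>) T = 0 \<and> (\<forall>s<T. 0 < bpme_pop n (snd \<omega>) s) \<and> fst \<omega> ! T = j)"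

fun env_offspring_pmf ::
    "('a \<Rightarrow> 'a pmf) \<Rightarrow> ('a \<Rightarrow> nat pmf) \<Rightarrow> 'a \<Rightarrow> nat \<Rightarrow> ('a list \<times> (nat \<Rightarrow> nat)) pmf" where
  "env_offspring_pmf P R i 0 = return_pmf ([i], \<lambda>_. 0)"
| "env_offspring_pmf P R i (Suc t) = bind_pmf (env_offspring_pmf P R i t) (\<lambda>(qs, y).
     bind_pmf (P (last qs)) (\<lambda>q. map_pmf (\<lambda>m. (qs @ [q], y(Suc t := m))) (R q)))"

text \<open>Offspring sequences are indexed by time from 1 on (index 0 is unused); \<open>offspring_cons m y\<close>
  records m offspring at time 1 and delays \<open>y\<close> by one step.\<close>

definition offspring_cons :: "nat \<Rightarrow> (nat \<Rightarrow> nat) \<Rightarrow> nat \<Rightarrow> nat" where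
  "offspring_cons m y = (\<lambda>s. if s = 0 then 0 else if s = Suc 0 then m else y (s - 1))"

lemma env_offspring_pmf_head:
  "\<omega> \<in> set_pmf (env_offspring_pmf P R i t) \<Longrightarrow> fst \<omega> \<noteq> [] \<and> fst \<omega> ! 0 = i"
  by (induction t arbitrary: \<omega>) (auto simp: nth_append split: prod.splits)

lemma env_offspring_pmf_Suc_first_step:
  "env_offspring_pmf P R i (Suc t) = bind_pmf (P i) (\<lambda>k. bind_pmf (R k) (\<lambda>m.
      map_pmf (\<lambda>(qs, y). (i # qs, offspring_cons m y)) (env_offspring_pmf P R k t)))"
proof (induction t arbitrary: i)
  case 0
  show ?case
    by (simp add: map_pmf_def bind_return_pmf bind_assoc_pmf offspring_cons_def fun_upd_def)
      (intro bind_pmf_cong refl, auto simp: fun_eq_iff)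
next
  case (Suc t)
  have cons_upd: "(offspring_cons m y)(Suc (Suc t) := m') = offspring_cons m (y(Suc t := m'))"
    for m m' y by (auto simp: offspring_cons_def fun_eq_iff)
  have "env_offspring_pmf P R i (Suc (Suc t)) = bind_pmf (P i) (\<lambda>k. bind_pmf (R k) (\<lambda>m.
      bind_pmf (env_offspring_pmf P R k t) (\<lambda>(qs, y). bind_pmf (P (last (i # qs)))
      (\<lambda>q. map_pmf (\<lambda>m'. ((i # qs) @ [q], (offspring_cons m y)(Suc (Suc t) := m'))) (R q)))))"
    unfolding env_offspring_pmf.simps(2)[of P R i "Suc t"] Suc.IH
    by (simp add: bind_assoc_pmf bind_map_pmf case_prod_unfold)
  also have "\<dots> = bind_pmf (P i) (\<lambda>k. bind_pmf (R k) (\<lambda>m. bind_pmf (env_offspring_pmf P R k t)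
      (\<lambda>(qs, y). map_pmf (\<lambda>(qs, y). (i # qs, offspring_cons m y)) (bind_pmf (P (last qs))
      (\<lambda>q. map_pmf (\<lambda>m'. (qs @ [q], y(Suc t := m'))) (R q))))))"
  proof (intro bind_pmf_cong refl)
    fix k m \<omega> assume "\<omega> \<in> set_pmf (env_offspring_pmf P R k t)"
    then have "fst \<omega> \<noteq> []" by (auto dest: env_offspring_pmf_head)
    then show "(case \<omega> of (qs, y) \<Rightarrow> bind_pmf (P (last (i # qs)))
      (\<lambda>q. map_pmf (\<lambda>m'. ((i # qs) @ [q], (offspring_cons m y)(Suc (Suc t) := m'))) (R q))) =
      (case \<omega> of (qs, y) \<Rightarrow> map_pmf (\<lambda>(qs, y). (i # qs, offspring_cons m y)) (bind_pmf (P (last qs))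
      (\<lambda>q. map_pmf (\<lambda>m'. (qs @ [q], y(Suc t := m'))) (R q))))"
      by (auto simp: cons_upd map_bind_pmf pmf.map_comp o_def split: prod.splits)
  qed
  also have "\<dots> = bind_pmf (P i) (\<lambda>k. bind_pmf (R k) (\<lambda>m.
      map_pmf (\<lambda>(qs, y). (i # qs, offspring_cons m y)) (env_offspring_pmf P R k (Suc t))))"
    by (simp add: map_bind_pmf case_prod_unfold)
  finally show ?case .
qed

definition realised_offspring_pmf :: "('a::finite \<Rightarrow> nat pmf) \<Rightarrow> nat \<Rightarrow> (nat \<Rightarrow> 'a) \<Rightarrow> (nat \<Rightarrow> nat) pmf" where
  "realised_offspring_pmf R t g = map_pmf (\<lambda>xi s. if s \<in> {1..t} then xi (s, g s) else 0) (Xilaw R t)"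

lemma realised_offspring_pmf_0: "realised_offspring_pmf R 0 g = return_pmf (\<lambda>_. 0)"
  by (simp add: realised_offspring_pmf_def Xilaw_def)

lemma realised_offspring_pmf_Suc: "realised_offspring_pmf R (Suc t) g =
   map_pmf (\<lambda>(m, y). y(Suc t := m)) (pair_pmf (R (g (Suc t))) (realised_offspring_pmf R t g))"
proof -
  let ?p = "(\<lambda>(s, k). R k) :: nat \<times> 'a \<Rightarrow> nat pmf"
  let ?A = "{Suc t} \<times> (UNIV :: 'a set)" and ?B = "{1..t} \<times> (UNIV :: 'a set)"
  have "{1..Suc t} \<times> (UNIV :: 'a set) = ?A \<union> ?B" by auto
  have split: "Xilaw R (Suc t) = map_pmf (\<lambda>(f, g) x. if x \<in> ?A then f x else g x)
      (pair_pmf (Pi_pmf ?A 0 ?p) (Pi_pmf ?B 0 ?p))"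
    unfolding Xilaw_def by (subst \<open>{1..Suc t} \<times> UNIV = ?A \<union> ?B\<close>, rule Pi_pmf_union) auto
  have component: "map_pmf (\<lambda>f. f (Suc t, g (Suc t))) (Pi_pmf ?A 0 ?p) = R (g (Suc t))"
    by (subst Pi_pmf_component) auto
  have "realised_offspring_pmf R (Suc t) g = map_pmf (\<lambda>(m, y). y(Suc t := m))
      (map_pmf (\<lambda>(a, b). (a (Suc t, g (Suc t)), (\<lambda>s. if s \<in> {1..t} then b (s, g s) else 0)))
        (pair_pmf (Pi_pmf ?A 0 ?p) (Pi_pmf ?B 0 ?p)))"
    unfolding realised_offspring_pmf_def split pmf.map_comp o_def
    by (intro map_pmf_cong refl) (auto simp: fun_eq_iff)
  also have "\<dots> = map_pmf (\<lambda>(m, y). y(Suc t := m)) (pair_pmf (R (g (Suc t))) (realised_offspring_pmf R t g))"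
    unfolding map_pair component by (simp add: realised_offspring_pmf_def Xilaw_def)
  finally show ?thesis .
qed

lemma Qpath_length: "qs \<in> set_pmf (Qpath P i t) \<Longrightarrow> length qs = Suc t"
  by (induction t arbitrary: qs) auto

lemma bind_map_pair_pmf_commute:
  "bind_pmf A (\<lambda>q. map_pmf (F q) (pair_pmf (B q) Y)) =
   bind_pmf Y (\<lambda>y. bind_pmf A (\<lambda>q. map_pmf (\<lambda>m. F q (m, y)) (B q)))"
  unfolding pair_pmf_def map_pmf_def bind_assoc_pmf bind_return_pmf
  by (subst bind_commute_pmf[of Y], intro bind_pmf_cong refl, subst bind_commute_pmf[of Y]) simp

lemma env_offspring_pmf_eq_bind_Qpath:
  "bind_pmf (Qpath P i t) (\<lambda>qs. map_pmf (Pair qs) (realised_offspring_pmf R t (\<lambda>s. qs ! s))) =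
     env_offspring_pmf P R i t"
proof (induction t)
  case 0
  then show ?case by (simp add: realised_offspring_pmf_0 map_pmf_def bind_return_pmf)
next
  case (Suc t)
  have "bind_pmf (Qpath P i (Suc t))
      (\<lambda>qs. map_pmf (Pair qs) (realised_offspring_pmf R (Suc t) (\<lambda>s. qs ! s))) =
    bind_pmf (Qpath P i t) (\<lambda>qs. bind_pmf (P (last qs)) (\<lambda>q.
      map_pmf (Pair (qs @ [q])) (realised_offspring_pmf R (Suc t) (\<lambda>s. (qs @ [q]) ! s))))"
    by (simp add: bind_assoc_pmf bind_map_pmf)
  also have "\<dots> = bind_pmf (Qpath P i t) (\<lambda>qs. bind_pmf (P (last qs)) (\<lambda>q.
      map_pmf (\<lambda>(m, y). (qs @ [q], y(Suc t := m)))
        (pair_pmf (R q) (realised_offspring_pmf R t (\<lambda>s. qs ! s)))))"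
  proof (intro bind_pmf_cong refl)
    fix qs q assume "qs \<in> set_pmf (Qpath P i t)"
    then have len: "length qs = Suc t" by (rule Qpath_length)
    then have "realised_offspring_pmf R t (\<lambda>s. (qs @ [q]) ! s) = realised_offspring_pmf R t (\<lambda>s. qs ! s)"
      unfolding realised_offspring_pmf_def by (intro map_pmf_cong refl) (auto simp: fun_eq_iff nth_append)
    with len show "map_pmf (Pair (qs @ [q])) (realised_offspring_pmf R (Suc t) (\<lambda>s. (qs @ [q]) ! s)) =
        map_pmf (\<lambda>(m, y). (qs @ [q], y(Suc t := m)))
          (pair_pmf (R q) (realised_offspring_pmf R t (\<lambda>s. qs ! s)))"
      by (simp add: realised_offspring_pmf_Suc pmf.map_comp o_def case_prod_unfold nth_append)
  qed
  also have "\<dots> = env_offspring_pmf P R i (Suc t)"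
    by (simp add: Suc.IH[symmetric] bind_map_pair_pmf_commute bind_assoc_pmf bind_map_pmf)
  finally show ?case .
qed

lemma halted_by_iff_halts_within:
  "halted_by n j t \<omega> \<longleftrightarrow>
     halts_within n j t ((\<lambda>(qs, xi). (qs, \<lambda>s. if s \<in> {1..t} then xi (s, qs ! s) else 0)) \<omega>)"
proof (cases \<omega>)
  case (Pair qs xi)
  let ?y = "\<lambda>s. if s \<in> {1..t} then xi (s, qs ! s) else 0"
  have same_pop: "s \<le> t \<Longrightarrow> Xproc n qs xi s = bpme_pop n ?y s" for s
    by (induction s) auto
  have "(Xproc n qs xi T = 0 \<and> (\<forall>s<T. Xproc n qs xi s > 0)) \<longleftrightarrow>
      (bpme_pop n ?y T = 0 \<and> (\<forall>s<T. 0 < bpme_pop n ?y s))" if "T \<le> t" for T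
    using that by (simp del: Xproc.simps bpme_pop.simps add: same_pop)
  then show ?thesis
    unfolding halted_by_def halts_within_def Pair fst_conv snd_conv prod.case by blast
qed

lemma halt_prob_by_eq_env_offspring_pmf:
  "halt_prob_by P R n i j t = measure_pmf.prob (env_offspring_pmf P R i t) {\<omega>. halts_within n j t \<omega>}"
proof -
  let ?realise = "(\<lambda>(qs, xi). (qs, \<lambda>s. if s \<in> {1..t} then xi (s, qs ! s) else 0))
    :: 'a list \<times> (nat \<times> 'a \<Rightarrow> nat) \<Rightarrow> _"
  have law: "map_pmf ?realise (pair_pmf (Qpath P i t) (Xilaw R t)) = env_offspring_pmf P R i t"
    unfolding env_offspring_pmf_eq_bind_Qpath[symmetric, of P R i t] pair_pmf_def realised_offspring_pmf_def
    by (simp add: map_bind_pmf bind_map_pmf bind_return_pmf map_pmf_def[symmetric] pmf.map_comp o_def)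
  have "halted_by n j t \<omega> \<longleftrightarrow> halts_within n j t (?realise \<omega>)" for \<omega>
    by (rule halted_by_iff_halts_within)
  then have event: "{\<omega>. halted_by n j t \<omega>} = ?realise -` {\<omega>. halts_within n j t \<omega>}"
    by blast
  have "measure_pmf.prob (pair_pmf (Qpath P i t) (Xilaw R t)) (?realise -` {\<omega>. halts_within n j t \<omega>}) =
      measure_pmf.prob (map_pmf ?realise (pair_pmf (Qpath P i t) (Xilaw R t))) {\<omega>. halts_within n j t \<omega>}"
    by (rule measure_map_pmf[symmetric])
  then show ?thesis
    unfolding halt_prob_by_def event law .
qed

section \<open>Halting within a given number of steps\<close>

lemma halt_prob_by_nonneg: "0 \<le> halt_prob_by P R n i j t"
  by (simp add: halt_prob_by_def)

lemma halt_prob_by_le_1: "halt_prob_by P R n i j t \<le> 1"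
  by (simp add: halt_prob_by_def)

lemma halt_prob_by_abs_le_1: "\<bar>halt_prob_by P R n i j t\<bar> \<le> 1"
  using halt_prob_by_nonneg[of P R n i j t] halt_prob_by_le_1[of P R n i j t]
  by (simp add: abs_le_iff)

lemma halts_within_0: "halts_within 0 j t \<omega> \<longleftrightarrow> fst \<omega> ! 0 = j"
  unfolding halts_within_def by (auto intro: exI[of _ 0])

lemma halt_prob_by_0: "halt_prob_by P R 0 i j t = (if i = j then 1 else 0)"
proof -
  let ?p = "env_offspring_pmf P R i t"
  have "{\<omega>. halts_within 0 j t \<omega>} \<inter> set_pmf ?p = (if i = j then UNIV else {}) \<inter> set_pmf ?p"
    by (auto simp: halts_within_0 dest: env_offspring_pmf_head)
  then have "halt_prob_by P R 0 i j t = measure_pmf.prob ?p (if i = j then UNIV else {})"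
    unfolding halt_prob_by_eq_env_offspring_pmf by (metis measure_Int_set_pmf)
  then show ?thesis by (simp add: measure_pmf.prob_space)
qed

lemma halt_prob_by_Suc_0: "halt_prob_by P R (Suc n) i j 0 = 0"
  by (simp add: halt_prob_by_eq_env_offspring_pmf halts_within_def)

lemma bpme_pop_offspring_cons:
  "bpme_pop (Suc n) (offspring_cons m y) (Suc s) = bpme_pop (n + m) y s"
  by (induction s) (auto simp: offspring_cons_def)

lemma halts_within_offspring_cons:
  "halts_within (Suc n) j (Suc t) (i # qs, offspring_cons m y) \<longleftrightarrow> halts_within (n + m) j t (qs, y)"
proof -
  have ex_le_Suc: "(\<exists>T\<le>Suc t. \<Phi> T) \<longleftrightarrow> \<Phi> 0 \<or> (\<exists>T\<le>t. \<Phi> (Suc T))" for \<Phi>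
    by (metis Suc_le_mono le0 not0_implies_Suc)
  show ?thesis
    unfolding halts_within_def ex_le_Suc
    by (simp del: bpme_pop.simps add: bpme_pop.simps(1) bpme_pop_offspring_cons All_less_Suc2)
qed

lemma halt_prob_by_Suc_Suc:
  "halt_prob_by P R (Suc n) i j (Suc t) = first_step P R i (\<lambda>m k. halt_prob_by P R (n + m) k j t)"
proof -
  have "(\<lambda>(qs, y). (i # qs, offspring_cons m y)) -` {\<omega>. halts_within (Suc n) j (Suc t) \<omega>} =
      {\<omega>. halts_within (n + m) j t \<omega>}" for m
    by (auto simp: halts_within_offspring_cons)
  then have "halt_prob_by P R (Suc n) i j (Suc t) = measure_pmf.expectation (P i) (\<lambda>k.
      measure_pmf.expectation (R k) (\<lambda>m. halt_prob_by P R (n + m) k j t))"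
    unfolding halt_prob_by_eq_env_offspring_pmf env_offspring_pmf_Suc_first_step
      measure_pmf_prob_bind_pmf measure_map_pmf by simp
  also have "\<dots> = first_step P R i (\<lambda>m k. halt_prob_by P R (n + m) k j t)"
    unfolding first_step_def
    by (simp add: measure_pmf_expectation_finite measure_pmf_expectation_nat[where C=1]
        halt_prob_by_abs_le_1)
  finally show ?thesis .
qed

lemma halt_prob_by_mono_Suc: "halt_prob_by P R n i j t \<le> halt_prob_by P R n i j (Suc t)"
proof (induction t arbitrary: n i j)
  case 0
  then show ?case by (cases n) (simp_all add: halt_prob_by_0 halt_prob_by_Suc_0 halt_prob_by_nonneg)
next
  case (Suc t)
  show ?case
  proof (cases n)
    case 0
    then show ?thesis by (simp add: halt_prob_by_0)
  next
    case (Suc n')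
    show ?thesis
      unfolding \<open>n = Suc n'\<close> halt_prob_by_Suc_Suc
      by (intro first_step_mono[where C=1] halt_prob_by_abs_le_1 Suc.IH)
  qed
qed

lemma halt_prob_by_mono: "t \<le> t' \<Longrightarrow> halt_prob_by P R n i j t \<le> halt_prob_by P R n i j t'"
  by (induction rule: dec_induct) (auto intro: order_trans halt_prob_by_mono_Suc)

lemma sum_halt_prob_by_0_mult:
  "(\<Sum>k\<in>UNIV. halt_prob_by P R 0 i k t * x k) = x i"
  by (simp add: halt_prob_by_0 if_distrib[of "\<lambda>c. c * _"] cong: if_cong)

text \<open>Halting from \<open>a + b\<close> within \<open>t\<close> steps requires halting from \<open>a\<close> within \<open>t\<close> steps
  (to an intermediate environment \<open>k\<close>) and then from \<open>b\<close>; the two inequalities below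
  express this without a strong Markov property, by induction on the first step.\<close>

lemma halt_prob_by_add_le:
  fixes P :: "'s::finite \<Rightarrow> 's pmf"
  shows "halt_prob_by P R (a + b) i j t \<le>
    (\<Sum>k\<in>UNIV. halt_prob_by P R a i k t * halt_prob_by P R b k j t)"
proof (induction t arbitrary: a i j)
  case 0
  then show ?case
    by (cases a)
      (simp_all add: sum_halt_prob_by_0_mult halt_prob_by_Suc_0 halt_prob_by_nonneg sum_nonneg)
next
  case (Suc t)
  show ?case
  proof (cases a)
    case 0
    then show ?thesis by (simp add: sum_halt_prob_by_0_mult)
  next
    case (Suc a')
    have "halt_prob_by P R (a + b) i j (Suc t) =
        first_step P R i (\<lambda>m k'. halt_prob_by P R (a' + m + b) k' j t)"
      using Suc by (simp add: halt_prob_by_Suc_Suc ac_simps)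
    also have "\<dots> \<le> first_step P R i (\<lambda>m k'.
        \<Sum>k\<in>UNIV. halt_prob_by P R (a' + m) k' k t * halt_prob_by P R b k j (Suc t))"
    proof (rule first_step_mono[where C="real CARD('s)"])
      fix m k'
      have "halt_prob_by P R (a' + m + b) k' j t \<le>
          (\<Sum>k\<in>UNIV. halt_prob_by P R (a' + m) k' k t * halt_prob_by P R b k j t)"
        by (rule Suc.IH)
      also have "\<dots> \<le> (\<Sum>k\<in>UNIV. halt_prob_by P R (a' + m) k' k t * halt_prob_by P R b k j (Suc t))"
        by (intro sum_mono mult_left_mono halt_prob_by_mono_Suc halt_prob_by_nonneg)
      finally show "halt_prob_by P R (a' + m + b) k' j t \<le> \<dots>" .
    qed (auto intro: order_trans[OF halt_prob_by_abs_le_1] abs_sum_mult_le_card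
        halt_prob_by_abs_le_1)
    also have "\<dots> = (\<Sum>k\<in>UNIV. halt_prob_by P R a i k (Suc t) * halt_prob_by P R b k j (Suc t))"
      using Suc by (simp add: first_step_sum_mult[where C=1] halt_prob_by_abs_le_1 halt_prob_by_Suc_Suc)
    finally show ?thesis .
  qed
qed

lemma halt_prob_by_add_ge:
  fixes P :: "'s::finite \<Rightarrow> 's pmf"
  shows "(\<Sum>k\<in>UNIV. halt_prob_by P R a i k t * halt_prob_by P R b k j t') \<le>
    halt_prob_by P R (a + b) i j (t + t')"
proof (induction t arbitrary: a i j)
  case 0
  then show ?case
    by (cases a) (simp_all add: sum_halt_prob_by_0_mult halt_prob_by_Suc_0 halt_prob_by_nonneg)
next
  case (Suc t)
  show ?case
  proof (cases a)
    case 0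
    then show ?thesis by (simp add: sum_halt_prob_by_0_mult halt_prob_by_mono)
  next
    case (Suc a')
    have "(\<Sum>k\<in>UNIV. halt_prob_by P R a i k (Suc t) * halt_prob_by P R b k j t') =
        first_step P R i (\<lambda>m k'. \<Sum>k\<in>UNIV. halt_prob_by P R (a' + m) k' k t * halt_prob_by P R b k j t')"
      using Suc by (simp add: first_step_sum_mult[where C=1] halt_prob_by_abs_le_1 halt_prob_by_Suc_Suc)
    also have "\<dots> \<le> first_step P R i (\<lambda>m k'. halt_prob_by P R (a' + m + b) k' j (t + t'))"
      by (rule first_step_mono[where C="real CARD('s)"])
        (auto intro: Suc.IH order_trans[OF halt_prob_by_abs_le_1] abs_sum_mult_le_card
          halt_prob_by_abs_le_1)
    also have "\<dots> = halt_prob_by P R (a + b) i j (Suc t + t')"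
      using Suc by (simp add: halt_prob_by_Suc_Suc ac_simps)
    finally show ?thesis .
  qed
qed

section \<open>Halting probabilities\<close>

lemma halt_prob_by_tendsto: "(\<lambda>t. halt_prob_by P R n i j t) \<longlonglongrightarrow> halt_prob P R n i j"
  unfolding halt_prob_def
  by (rule LIMSEQ_incseq_SUP)
    (auto intro: bdd_aboveI[of _ 1] halt_prob_by_le_1 simp: incseq_def halt_prob_by_mono)

lemma halt_prob_by_le_halt_prob: "halt_prob_by P R n i j t \<le> halt_prob P R n i j"
  unfolding halt_prob_def by (rule cSUP_upper) (auto intro: bdd_aboveI[of _ 1] halt_prob_by_le_1)

lemma halt_prob_nonneg: "0 \<le> halt_prob P R n i j"
  using halt_prob_by_nonneg halt_prob_by_le_halt_prob by (rule order_trans)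

lemma halt_prob_le_1: "halt_prob P R n i j \<le> 1"
  unfolding halt_prob_def by (rule cSUP_least) (auto simp: halt_prob_by_le_1)

lemma halt_prob_abs_le_1: "\<bar>halt_prob P R n i j\<bar> \<le> 1"
  using halt_prob_nonneg[of P R n i j] halt_prob_le_1[of P R n i j] by (simp add: abs_le_iff)

lemma halt_prob_0: "halt_prob P R 0 i j = (if i = j then 1 else 0)"
  unfolding halt_prob_def halt_prob_by_0 by simp

lemma halt_prob_add:
  "halt_prob P R (a + b) i j = (\<Sum>k\<in>UNIV. halt_prob P R a i k * halt_prob P R b k j)"
proof (rule antisym)
  have lim: "(\<lambda>t. \<Sum>k\<in>UNIV. halt_prob_by P R a i k t * halt_prob_by P R b k j t) \<longlonglongrightarrow>
      (\<Sum>k\<in>UNIV. halt_prob P R a i k * halt_prob P R b k j)"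
    by (intro tendsto_sum tendsto_mult halt_prob_by_tendsto)
  show "halt_prob P R (a + b) i j \<le> (\<Sum>k\<in>UNIV. halt_prob P R a i k * halt_prob P R b k j)"
    by (rule LIMSEQ_le[OF halt_prob_by_tendsto lim]) (auto intro: halt_prob_by_add_le)
  show "(\<Sum>k\<in>UNIV. halt_prob P R a i k * halt_prob P R b k j) \<le> halt_prob P R (a + b) i j"
    using halt_prob_by_add_ge[of P R a i _ b j _] halt_prob_by_le_halt_prob
    by (intro LIMSEQ_le_const2[OF lim]) (blast intro: order_trans)
qed

lemma mpow_extinction_matrix: "mpow (extinction_matrix P R) n $ i $ j = halt_prob P R n i j"
proof (induction n arbitrary: j)
  case 0
  then show ?case by (simp add: mpow_0 mat_def halt_prob_0)
next
  case (Suc n)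
  then show ?case
    using halt_prob_add[of P R n 1 i j]
    by (simp add: mpow_Suc matrix_matrix_mult_def extinction_matrix_def)
qed

lemma halt_prob_1_eq_first_step: "halt_prob P R 1 i j = first_step P R i (\<lambda>m k. halt_prob P R m k j)"
proof -
  have "(\<lambda>t. halt_prob_by P R 1 i j (Suc t)) \<longlonglongrightarrow> first_step P R i (\<lambda>m k. halt_prob P R m k j)"
    unfolding One_nat_def halt_prob_by_Suc_Suc add_0
    by (intro first_step_tendsto[where C=1] halt_prob_by_tendsto halt_prob_by_abs_le_1)
  moreover have "(\<lambda>t. halt_prob_by P R 1 i j (Suc t)) \<longlonglongrightarrow> halt_prob P R 1 i j"
    by (rule LIMSEQ_Suc[OF halt_prob_by_tendsto])
  ultimately show ?thesis
    using LIMSEQ_unique by blast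
qed

lemma genf_extinction_matrix: "genf P R (extinction_matrix P R) = extinction_matrix P R"
proof -
  have "genf P R (extinction_matrix P R) $ i $ j = extinction_matrix P R $ i $ j" for i j
  proof -
    have "genf P R (extinction_matrix P R) $ i $ j =
        first_step P R i (\<lambda>n k. mpow (extinction_matrix P R) n $ k $ j)"
      by (rule genf_eq_first_step[where C=1]) (simp add: mpow_extinction_matrix halt_prob_abs_le_1)
    also have "\<dots> = halt_prob P R 1 i j"
      unfolding mpow_extinction_matrix by (rule halt_prob_1_eq_first_step[symmetric])
    finally show ?thesis
      by (simp add: extinction_matrix_def)
  qed
  then show ?thesis by (simp add: vec_eq_iff)
qed

section \<open>Iterating the generating function\<close>

lemma mpow_abs_le_1:
  assumes "0 \<le> A" "A \<le> extinction_matrix P R"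
  shows "\<bar>mpow A n $ i $ j\<bar> \<le> 1"
proof -
  have "0 \<le> mpow A n $ i $ j" "mpow A n $ i $ j \<le> mpow (extinction_matrix P R) n $ i $ j"
    using mpow_mono[OF assms, of n] by (simp_all add: less_eq_vec_def)
  then show ?thesis
    using halt_prob_le_1[of P R n i j] by (simp add: mpow_extinction_matrix)
qed

lemma genf_mono:
  assumes "0 \<le> A" "A \<le> B" "B \<le> extinction_matrix P R"
  shows "0 \<le> genf P R A \<and> genf P R A \<le> genf P R B"
proof -
  have bounded: "\<bar>mpow A n $ k $ j\<bar> \<le> 1" "\<bar>mpow B n $ k $ j\<bar> \<le> 1" for n k j
    using assms by (auto intro!: mpow_abs_le_1 intro: order_trans)
  have "0 \<le> mpow A n $ k $ j" "mpow A n $ k $ j \<le> mpow B n $ k $ j" for n k j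
    using mpow_mono[OF assms(1,2), of n] by (simp_all add: less_eq_vec_def)
  then have "0 \<le> genf P R A $ i $ j \<and> genf P R A $ i $ j \<le> genf P R B $ i $ j" for i j
    unfolding genf_eq_first_step[where C=1, OF bounded(1)] genf_eq_first_step[where C=1, OF bounded(2)]
    by (intro conjI first_step_nonneg[where C=1] first_step_mono[where C=1] bounded)
  then show ?thesis by (simp add: less_eq_vec_def)
qed

lemma halt_prob_by_le_mpow:
  assumes "0 \<le> A" "\<And>i j. halt_prob_by P R 1 i j t \<le> A $ i $ j"
  shows "halt_prob_by P R n i j t \<le> mpow A n $ i $ j"
proof (induction n arbitrary: j)
  case 0
  then show ?case by (simp add: mpow_0 mat_def halt_prob_by_0)
next
  case (Suc n)
  have "halt_prob_by P R (n + 1) i j t \<le> (\<Sum>k\<in>UNIV. halt_prob_by P R n i k t * halt_prob_by P R 1 k j t)"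
    by (rule halt_prob_by_add_le)
  also have "\<dots> \<le> (\<Sum>k\<in>UNIV. mpow A n $ i $ k * A $ k $ j)"
    using mpow_mono[OF assms(1) order.refl, of n] assms Suc.IH
    by (intro sum_mono mult_mono) (auto simp: less_eq_vec_def halt_prob_by_nonneg)
  finally show ?case by (simp add: mpow_Suc matrix_matrix_mult_def)
qed

lemma genf_iterate_bounds:
  assumes "0 \<le> M" "M \<le> extinction_matrix P R"
  shows "(\<forall>i j. halt_prob_by P R 1 i j k \<le> (genf P R ^^ k) M $ i $ j) \<and>
    (genf P R ^^ k) M \<le> extinction_matrix P R"
proof (induction k)
  case 0
  then show ?case using assms by (simp add: halt_prob_by_Suc_0 less_eq_vec_def)
next
  case (Suc k)
  let ?F = "(genf P R ^^ k) M"
  have lower: "\<And>i j. halt_prob_by P R 1 i j k \<le> ?F $ i $ j" and upper: "?F \<le> extinction_matrix P R"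
    using Suc.IH by auto
  have "0 \<le> ?F $ i $ j" for i j
    using order_trans[OF halt_prob_by_nonneg lower] .
  then have nonneg: "0 \<le> ?F"
    by (simp add: less_eq_vec_def)
  have "genf P R ?F \<le> genf P R (extinction_matrix P R)"
    using genf_mono[OF nonneg upper order.refl] by simp
  moreover have "halt_prob_by P R 1 i j (Suc k) \<le> genf P R ?F $ i $ j" for i j
  proof -
    have "halt_prob_by P R 1 i j (Suc k) = first_step P R i (\<lambda>m k'. halt_prob_by P R m k' j k)"
      using halt_prob_by_Suc_Suc[of P R 0] by simp
    also have "\<dots> \<le> first_step P R i (\<lambda>m k'. mpow ?F m $ k' $ j)"
      by (intro first_step_mono[where C=1] halt_prob_by_abs_le_1 mpow_abs_le_1[OF nonneg upper]
          halt_prob_by_le_mpow[OF nonneg] lower)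
    also have "\<dots> = genf P R ?F $ i $ j"
      by (rule genf_eq_first_step[symmetric]) (rule mpow_abs_le_1[OF nonneg upper])
    finally show ?thesis .
  qed
  ultimately show ?case by (simp add: genf_extinction_matrix)
qed

lemma genf_iterates_tendsto:
  assumes "0 \<le> M" "M \<le> extinction_matrix P R"
  shows "(\<lambda>k. (genf P R ^^ k) M) \<longlonglongrightarrow> extinction_matrix P R"
proof (intro vec_tendstoI)
  fix i j
  have lower: "(\<lambda>k. halt_prob_by P R 1 i j k) \<longlonglongrightarrow> extinction_matrix P R $ i $ j"
    unfolding extinction_matrix_def by (simp add: halt_prob_by_tendsto)
  have "\<forall>k. halt_prob_by P R 1 i j k \<le> (genf P R ^^ k) M $ i $ j"
    and "\<forall>k. (genf P R ^^ k) M $ i $ j \<le> extinction_matrix P R $ i $ j"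
    using genf_iterate_bounds[OF assms] by (simp_all add: less_eq_vec_def)
  then show "(\<lambda>k. (genf P R ^^ k) M $ i $ j) \<longlonglongrightarrow> extinction_matrix P R $ i $ j"
    by (intro tendsto_sandwich[OF _ _ lower tendsto_const] always_eventually)
qed

theorem theorem1p4:
  fixes P :: "'s::finite \<Rightarrow> 's pmf" and R :: "'s \<Rightarrow> nat pmf"
  assumes "irreducible_chain P"
  shows "(\<forall>n\<ge>1. \<forall>i j. mpow (extinction_matrix P R) n $ i $ j = halt_prob P R n i j)
    \<and> genf P R (extinction_matrix P R) = extinction_matrix P R
    \<and> (\<forall>M :: real^'s^'s. (\<forall>i j. 0 \<le> M $ i $ j \<and> M $ i $ j \<le> extinction_matrix P R $ i $ j)
         \<longrightarrow> (\<lambda>k. (genf P R ^^ k) M) \<longlonglongrightarrow> extinction_matrix P R)"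
proof (intro conjI allI impI)
  fix n i j
  show "mpow (extinction_matrix P R) n $ i $ j = halt_prob P R n i j"
    by (rule mpow_extinction_matrix)
next
  show "genf P R (extinction_matrix P R) = extinction_matrix P R"
    by (rule genf_extinction_matrix)
next
  fix M :: "real^'s^'s"
  assume "\<forall>i j. 0 \<le> M $ i $ j \<and> M $ i $ j \<le> extinction_matrix P R $ i $ j"
  then show "(\<lambda>k. (genf P R ^^ k) M) \<longlonglongrightarrow> extinction_matrix P R"
    by (intro genf_iterates_tendsto) (simp_all add: less_eq_vec_def)
qed

end
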